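(* Let $p$ be an odd prime and let $q\in\mathbb{C}_p$ satisfy $|1-q|_p<p^{-1/(p-1)}$. Then for every integer $n\ge 0$, $$\sum_{j=0}^{p-1}(-1)^j[j]_q^n\equiv \frac{2}{[2]_q}E_{n,q}\pmod{[p]_q},$$ i.e. $\left|\frac{2}{[2]_q}E_{n,q}-\sum_{j=0}^{p-1}(-1)^j[j]_q^n\right|_p\le |[p]_q|_p$.
   Context: $\mathbb{C}_p$ is the completion of an algebraic closure of $\mathbb{Q}_p$, with absolute value $|\cdot|_p$ normalized by $|p|_p=1/p$. For $x\in\mathbb{Z}_p$ put $[x]_q=\frac{1-q^x}{1-q}$ and $[x]_{-q}=\frac{1-(-q)^x}{1+q}$. For a function $f$ on $\mathbb{Z}_p$ the fermionic $p$-adic $q$-integral is $\int_{\mathbb{Z}_p}f(x)\,d\mu_{-q}(x)=\lim_{N\to\infty}\frac{1}{[p^N]_{-q}}\sum_{x=0}^{p^N-1}f(x)(-q)^x$. The $q$-Euler numbers are $E_{n,q}=\int_{\mathbb{Z}_p}[x]_q^n q^{-x}\,d\mu_{-q}(x)$; equivalently $\frac{2}{[2]_q}E_{n,q}=\lim_{N\to\infty}\sum_{x=0}^{p^N-1}(-1)^x[x]_q^n$. (They satisfy $E_{0,q}=[2]_q/2$ and $(qE+1)^n+E_{n,q}=[2]_q\delta_{0,n}$, with $E^k$ replaced by $E_{k,q}$ after expansion.) For $a,b,m\in\mathbb{C}_p$, $a\equiv b \pmod m$ means $|a-b|_p\le|m|_p$. *)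

theory Defs
  imports Complex_Main "HOL-Computational_Algebra.Polynomial" "HOL-Computational_Algebra.Primes"
begin

text \<open>C_p is modelled abstractly: a field of characteristic 0 with an absolute value
  va that is non-archimedean, normalised by va p = 1/p, complete, algebraically closed,
  and in which the algebraic numbers (roots of nonzero rational polynomials) are dense.
  Every such valued field is isometrically isomorphic to C_p.\<close>

definition va_cauchy :: "('a::field \<Rightarrow> real) \<Rightarrow> (nat \<Rightarrow> 'a) \<Rightarrow> bool" where
  "va_cauchy va S \<longleftrightarrow> (\<forall>e>0. \<exists>N. \<forall>m\<ge>N. \<forall>k\<ge>N. va (S m - S k) < e)"

definition va_lim :: "('a::field \<Rightarrow> real) \<Rightarrow> (nat \<Rightarrow> 'a) \<Rightarrow> 'a \<Rightarrow> bool" where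
  "va_lim va S L \<longleftrightarrow> (\<forall>e>0. \<exists>N. \<forall>m\<ge>N. va (S m - L) < e)"

definition is_Cp :: "nat \<Rightarrow> ('a::field_char_0 \<Rightarrow> real) \<Rightarrow> bool" where
  "is_Cp p va \<longleftrightarrow>
     (\<forall>x. va x \<ge> 0) \<and> (\<forall>x. va x = 0 \<longleftrightarrow> x = 0) \<and>
     (\<forall>x y. va (x * y) = va x * va y) \<and>
     (\<forall>x y. va (x + y) \<le> max (va x) (va y)) \<and>
     va (of_nat p) = 1 / real p \<and>
     (\<forall>S. va_cauchy va S \<longrightarrow> (\<exists>L. va_lim va S L)) \<and>
     (\<forall>P::'a poly. degree P \<ge> 1 \<longrightarrow> (\<exists>z. poly P z = 0)) \<and>
     (\<forall>x. \<forall>e>0. \<exists>y. va (x - y) < e \<and>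
          (\<exists>P::rat poly. P \<noteq> 0 \<and> poly (map_poly of_rat P) y = 0))"

text \<open>q-integer [x]_q for natural x, as the geometric sum 1 + q + ... + q^(x-1),
  which equals (1 - q^x)/(1 - q) for q \<noteq> 1 (and is x for q = 1).\<close>
definition qint :: "'a::field \<Rightarrow> nat \<Rightarrow> 'a" where
  "qint q x = (\<Sum>i<x. q ^ i)"

text \<open>[x]_{-q} = (1 - (-q)^x)/(1 + q), again as a geometric sum.\<close>
definition qint_neg :: "'a::field \<Rightarrow> nat \<Rightarrow> 'a" where
  "qint_neg q x = (\<Sum>i<x. (- q) ^ i)"

definition fermionic_qint :: "nat \<Rightarrow> ('a::field_char_0 \<Rightarrow> real) \<Rightarrow> 'a \<Rightarrow> (nat \<Rightarrow> 'a) \<Rightarrow> 'a" where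
  "fermionic_qint p va q f = (THE L. va_lim va
      (\<lambda>N. (1 / qint_neg q (p ^ N)) * (\<Sum>x<p ^ N. f x * (- q) ^ x)) L)"

definition qEuler :: "nat \<Rightarrow> ('a::field_char_0 \<Rightarrow> real) \<Rightarrow> nat \<Rightarrow> 'a \<Rightarrow> 'a" where
  "qEuler p va n q = fermionic_qint p va q (\<lambda>x. qint q x ^ n * inverse q ^ x)"

end

theory Submission
  imports Defs
begin

(* Write S m = sum_{x<m} (-1)^x [x]_q^n and R m = S m / [m]_{-q}, so that
   E_{n,q} is the limit of R (p^N).  Splitting x < m*b as x = j + m*k (j < m, k < b) and using
   [j + m k]_q = [j]_q + q^j [m]_q [k]_{q^m}, both S (m*b) and [m*b]_{-q} agree with
   (sum_{k<b} (-1)^k) times S m resp. [m]_{-q} modulo [m]_q (block lemmas).  For odd m, b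
   this gives |R (m b) - R m| <= |[m]_q|, because [m]_{-q} is a unit for odd m.
   Taking m = p^N, b = p: since |[p^N]_q| <= max(|p|, |1 - q|)^N the sequence R (p^N) is
   Cauchy, hence converges (to E_{n,q}); and for N >= 1 every step is <= |[p]_q|, so
   E_{n,q} = R p modulo [p]_q.  Finally 2/[2]_q R p - S p = S p (1 - q^p)/(1 + q^p) is
   divisible by 1 - q^p = (1 - q)[p]_q. *)

subsection \<open>Identities for q-integers\<close>

text \<open>Additivity and multiplicativity of q-integers; together they give
  [j + m k]_q = [j]_q + q^j [m]_q [k]_{q^m}, the basis of every congruence below.\<close>
lemma qint_add: "qint q (a + b) = qint q a + q ^ a * qint q b"
  unfolding qint_def by (induction b) (simp_all add: algebra_simps power_add)

lemma qint_mult: "qint q (a * b) = qint q a * qint (q ^ a) b"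
proof (induction b)
  case 0
  then show ?case by (simp add: qint_def)
next
  case (Suc b)
  have "qint q (a * Suc b) = qint q (a * b) + q ^ (a * b) * qint q a"
    using qint_add[of q "a * b" a] by (simp add: add.commute)
  also have "\<dots> = qint q a * qint (q ^ a) (Suc b)"
    using Suc by (simp add: qint_def power_mult algebra_simps)
  finally show ?case .
qed

lemma qint_one_minus: "(1 - q) * qint q m = 1 - q ^ m"
  unfolding qint_def by (simp add: one_diff_power_eq)

lemma sum_lessThan_add: "(\<Sum>x<a + (c::nat). g x) = (\<Sum>x<a. g x) + (\<Sum>j<c. g (a + j))"
  by (induction c) (simp_all add: algebra_simps)

text \<open>The alternating sum of an odd number of signs is 1; this is where oddness of p enters.\<close>
lemma alternating_sum_odd:
  assumes "odd b" shows "(\<Sum>k<b. (-1::'a::ring_1) ^ k) = 1"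
proof -
  have "(\<Sum>k<2 * c. (-1::'a) ^ k) = 0" for c
    by (induction c) (simp_all add: algebra_simps)
  moreover obtain c where "b = Suc (2 * c)" using assms oddE by fastforce
  ultimately show ?thesis by simp
qed

text \<open>The alternating power sum S m and the Riemann-sum quotient R m = S m / [m]_{-q}
  whose limit along m = p^N is the q-Euler number.\<close>
definition alt_power_sum :: "'a::field \<Rightarrow> nat \<Rightarrow> nat \<Rightarrow> 'a" where
  "alt_power_sum q n m = (\<Sum>x<m. (-1) ^ x * qint q x ^ n)"

definition qEuler_approx :: "'a::field \<Rightarrow> nat \<Rightarrow> nat \<Rightarrow> 'a" where
  "qEuler_approx q n m = alt_power_sum q n m / qint_neg q m"

subsection \<open>Non-archimedean absolute values\<close>

locale nav =
  fixes va :: "'a::field \<Rightarrow> real"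
  assumes va_nonneg: "va x \<ge> 0"
    and va_zero: "va x = 0 \<longleftrightarrow> x = 0"
    and va_mult: "va (x * y) = va x * va y"
    and va_ultra: "va (x + y) \<le> max (va x) (va y)"
begin

lemma va_0 [simp]: "va 0 = 0"
  using va_zero by simp

lemma va_one [simp]: "va 1 = 1"
proof -
  have "va 1 = va 1 * va 1" using va_mult[of 1 1] by simp
  moreover have "va 1 \<noteq> 0" using va_zero by simp
  ultimately show ?thesis by simp
qed

lemma va_minus [simp]: "va (- x) = va x"
proof -
  have "va (-1) * va (-1) = 1" using va_mult[of "-1" "-1"] by simp
  then have "va (-1) = 1"
    using va_nonneg[of "-1"] by (metis abs_of_nonneg abs_square_eq_1 power2_eq_square)
  then show ?thesis using va_mult[of "-1" x] by simp
qed

lemma va_power: "va (x ^ n) = va x ^ n"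
  by (induction n) (simp_all add: va_mult)

lemma va_divide: "va (x / y) = va x / va y"
proof (cases "y = 0")
  case False
  then have "va x = va (x / y) * va y" using va_mult[of "x / y" y] by simp
  moreover have "va y \<noteq> 0" using False va_zero by simp
  ultimately show ?thesis by simp
qed simp

lemma va_commute: "va (x - y) = va (y - x)"
  using va_minus[of "x - y"] by simp

lemma va_diff: "va (x - y) \<le> max (va x) (va y)"
  using va_ultra[of x "-y"] by simp

lemma va_add_le: "va x \<le> B \<Longrightarrow> va y \<le> B \<Longrightarrow> va (x + y) \<le> B"
  using va_ultra[of x y] by simp

lemma va_diff_le: "va x \<le> B \<Longrightarrow> va y \<le> B \<Longrightarrow> va (x - y) \<le> B"
  using va_diff[of x y] by simp

lemma va_sum_le:
  assumes "\<And>i. i \<in> A \<Longrightarrow> va (f i) \<le> B" and "0 \<le> B"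
  shows "va (sum f A) \<le> B"
  using assms by (induction A rule: infinite_finite_induct) (auto intro: va_add_le)

lemma va_of_nat: "va (of_nat n) \<le> 1"
  by (induction n) (auto intro: va_add_le)

lemma va_unit: assumes "va a = 1" "va (a - b) < 1" shows "va b = 1"
proof -
  have "va b \<le> max (va a) (va (a - b))" using va_diff[of a "a - b"] by simp
  moreover have "va a \<le> max (va b) (va (a - b))" using va_ultra[of b "a - b"] by simp
  ultimately show ?thesis using assms by (auto simp: max_def split: if_splits)
qed

text \<open>If an odd integer p = 2k + 1 has |p| < 1, then 2 is a unit, as 1 = p - 2k.\<close>
lemma va_two:
  assumes "odd p" "va (of_nat p) < 1" shows "va 2 = 1"
proof -
  obtain k where k: "p = 2 * k + 1" using assms(1) oddE by blast
  have "(1::'a) = of_nat p - 2 * of_nat k" by (simp add: k)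
  then have "1 \<le> max (va (of_nat p)) (va (2 * of_nat k))" using va_diff va_one by metis
  moreover have "va (2 * of_nat k) \<le> va 2"
    using va_of_nat[of k] va_nonneg[of 2] by (simp add: va_mult mult_left_le)
  moreover have "va 2 \<le> 1" using va_of_nat[of 2] by simp
  ultimately show ?thesis using assms(2) by (auto simp: max_def split: if_splits)
qed

lemma va_power_diff:
  assumes "va x \<le> 1" "va y \<le> 1" shows "va (x ^ n - y ^ n) \<le> va (x - y)"
proof (induction n)
  case 0
  then show ?case using va_nonneg by simp
next
  case (Suc n)
  have split: "x ^ Suc n - y ^ Suc n = x * (x ^ n - y ^ n) + (x - y) * y ^ n"
    by (simp add: algebra_simps)
  have "va x * va (x ^ n - y ^ n) \<le> 1 * va (x - y)"
    using Suc assms va_nonneg by (intro mult_mono) auto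
  moreover have "va (x - y) * va y ^ n \<le> va (x - y) * 1"
    using assms va_nonneg by (intro mult_left_mono power_le_one) auto
  ultimately show ?case
    unfolding split by (intro va_add_le) (simp_all add: va_mult va_power)
qed

lemma va_qint_le: assumes "va r \<le> 1" shows "va (qint r k) \<le> 1"
  unfolding qint_def using assms
  by (intro va_sum_le) (auto simp: va_power power_le_one va_nonneg)

lemma va_qint_minus_nat:
  assumes "va r \<le> 1" shows "va (qint r m - of_nat m) \<le> va (1 - r)"
proof -
  have "qint r m - of_nat m = (\<Sum>i<m. r ^ i - 1)"
    unfolding qint_def by (simp add: sum_subtractf)
  also have "\<dots> = (\<Sum>i<m. - ((1 - r) * qint r i))"
    by (simp add: qint_one_minus)
  also have "va \<dots> \<le> va (1 - r)"
    using va_qint_le[OF assms] va_nonneg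
    by (intro va_sum_le) (auto simp: va_mult mult_left_le)
  finally show ?thesis .
qed

lemma va_telescope:
  assumes "\<And>i. N \<le> i \<Longrightarrow> va (A (Suc i) - A i) \<le> B" and "0 \<le> B"
  shows "va (A (N + k) - A N) \<le> B"
proof (induction k)
  case 0
  then show ?case using assms(2) by simp
next
  case (Suc k)
  have "A (N + Suc k) - A N = (A (Suc (N + k)) - A (N + k)) + (A (N + k) - A N)" by simp
  then show ?case using Suc assms(1)[of "N + k"] by (metis le_add1 va_add_le)
qed

lemma va_cauchy_geometric:
  assumes steps: "\<And>N. va (A (Suc N) - A N) \<le> c ^ N" and c: "0 \<le> c" "c < 1"
  shows "va_cauchy va A"
  unfolding va_cauchy_def
proof (intro allI impI)
  fix e :: real assume "e > 0"
  then obtain N where N: "c ^ N < e" using real_arch_pow_inv c by blast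
  have near: "va (A m - A N) \<le> c ^ N" if "N \<le> m" for m
  proof -
    have "va (A (Suc i) - A i) \<le> c ^ N" if "N \<le> i" for i
      using steps[of i] power_decreasing[OF that] c by fastforce
    then have "va (A (N + (m - N)) - A N) \<le> c ^ N"
      using c by (intro va_telescope) auto
    then show ?thesis using that by simp
  qed
  show "\<exists>N. \<forall>m\<ge>N. \<forall>k\<ge>N. va (A m - A k) < e"
  proof (intro exI allI impI)
    fix m k assume "N \<le> m" "N \<le> k"
    then have "va ((A m - A N) - (A k - A N)) \<le> c ^ N" using near va_diff_le by blast
    then show "va (A m - A k) < e" using N by simp
  qed
qed

lemma va_lim_le:
  assumes lim: "va_lim va A L" and bound: "\<And>m. N \<le> m \<Longrightarrow> va (A m - X) \<le> B"
  shows "va (L - X) \<le> B"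
proof (rule ccontr)
  assume "\<not> ?thesis"
  then have gt: "B < va (L - X)" by simp
  then have "va (L - X) > 0" using va_nonneg[of "A N - X"] bound[of N] by linarith
  then obtain M where M: "\<forall>m\<ge>M. va (A m - L) < va (L - X)" using lim unfolding va_lim_def by blast
  define m where "m = max M N"
  have "va (L - X) \<le> max (va (A m - X)) (va (A m - L))"
    using va_diff[of "A m - X" "A m - L"] by simp
  moreover have "va (A m - X) < va (L - X)" using bound[of m] gt by (simp add: m_def)
  moreover have "va (A m - L) < va (L - X)" using M by (simp add: m_def)
  ultimately show False by simp
qed

text \<open>Limits are unique; needed to identify the definite description in fermionic_qint.\<close>
lemma va_lim_unique:
  assumes L: "va_lim va A L" and L': "va_lim va A L'" shows "L' = L"
proof (rule ccontr)
  assume "L' \<noteq> L"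
  then have d: "va (L - L') > 0" using va_nonneg va_zero by (metis less_eq_real_def right_minus_eq)
  then obtain N where "\<forall>m\<ge>N. va (A m - L') < va (L - L') / 2"
    using L' unfolding va_lim_def by (meson half_gt_zero)
  then have "va (L - L') \<le> va (L - L') / 2" using va_lim_le[OF L] by (meson less_imp_le)
  then show False using d by simp
qed

lemma va_block_sum:
  assumes "\<And>j k. j < m \<Longrightarrow> va (g (j + m * k) - (-1) ^ k * g j) \<le> B" and "0 \<le> B"
  shows "va ((\<Sum>x<m * b. g x) - (\<Sum>k<b. (-1) ^ k) * (\<Sum>x<m. g x)) \<le> B"
proof (induction b)
  case 0
  then show ?case using assms by simp
next
  case (Suc b)
  have "(\<Sum>x<m * Suc b. g x) - (\<Sum>k<Suc b. (-1) ^ k) * (\<Sum>x<m. g x)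
     = ((\<Sum>x<m * b. g x) - (\<Sum>k<b. (-1) ^ k) * (\<Sum>x<m. g x))
       + (\<Sum>j<m. g (j + m * b) - (-1) ^ b * g j)"
    using sum_lessThan_add[of g "m * b" m]
    by (simp add: sum_subtractf sum_distrib_left sum_distrib_right algebra_simps)
  moreover have "va (\<Sum>j<m. g (j + m * b) - (-1) ^ b * g j) \<le> B"
    using assms by (intro va_sum_le) auto
  ultimately show ?case using Suc by (simp add: va_add_le)
qed

end

subsection \<open>Estimates for q close to 1\<close>

text \<open>Throughout, |1 - q| < 1.  This is all the theorem needs of its hypothesis on q.\<close>
locale nav_near_one = nav +
  fixes q :: "'a::field"
  assumes near_one: "va (1 - q) < 1"
begin

lemma va_q: "va q = 1"
  using va_unit[of 1 q] near_one by simp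

lemma va_q_power: "va (q ^ m) = 1"
  by (simp add: va_power va_q)

lemma va_qint: "va (qint q m) \<le> 1"
  using va_qint_le va_q by simp

text \<open>1 - q^m = (1 - q) [m]_q, so 1 - q^m is divisible both by 1 - q and by [m]_q.\<close>
lemma va_one_minus_q_power:
  shows "va (1 - q ^ m) \<le> va (qint q m)" and "va (1 - q ^ m) \<le> va (1 - q)"
proof -
  have eq: "va (1 - q ^ m) = va (1 - q) * va (qint q m)"
    by (simp flip: qint_one_minus add: va_mult)
  show "va (1 - q ^ m) \<le> va (qint q m)"
    unfolding eq using near_one va_nonneg[of "qint q m"] va_nonneg[of "1 - q"]
    by (simp add: mult_left_le_one_le)
  show "va (1 - q ^ m) \<le> va (1 - q)"
    unfolding eq using va_qint[of m] va_nonneg[of "1 - q"] by (simp add: mult_left_le)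
qed

lemma va_qint_mult_le: "va (qint q (a * b)) \<le> va (qint q a)"
  using va_qint_le[of "q ^ a" b] va_q_power va_nonneg[of "qint q a"]
  by (simp add: qint_mult va_mult mult_left_le)

text \<open>[p^N]_q tends to 0 geometrically, since [p]_r = p modulo 1 - r for every r = q^m.\<close>
lemma va_qint_power:
  "va (qint q (p ^ N)) \<le> max (va (of_nat p)) (va (1 - q)) ^ N"
proof (induction N)
  case 0
  then show ?case by (simp add: qint_def)
next
  case (Suc N)
  define c where "c = max (va (of_nat p)) (va (1 - q))"
  define r where "r = q ^ (p ^ N)"
  have c_nonneg: "0 \<le> c" by (simp add: c_def va_nonneg le_max_iff_disj)
  have "va (qint r p - of_nat p) \<le> c"
    using va_qint_minus_nat[of r p] va_one_minus_q_power(2)[of "p ^ N"]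
    by (simp add: r_def va_q_power c_def)
  then have "va ((qint r p - of_nat p) + of_nat p) \<le> c"
    by (intro va_add_le) (simp_all add: c_def)
  then have "va (qint q (p ^ N)) * va (qint r p) \<le> c ^ N * c"
    using Suc va_nonneg c_nonneg by (intro mult_mono) (simp_all add: c_def)
  moreover have "qint q (p ^ Suc N) = qint q (p ^ N) * qint r p"
    unfolding power_Suc2 r_def by (rule qint_mult)
  ultimately show ?case
    by (simp add: va_mult c_def mult.commute)
qed

lemma va_alt_power_sum: "va (alt_power_sum q n m) \<le> 1"
  unfolding alt_power_sum_def
  by (intro va_sum_le) (auto simp: va_mult va_power va_qint power_le_one va_nonneg)

text \<open>[m]_{-q} is congruent to the alternating sum of m signs modulo 1 - q, hence a unit for odd m.\<close>
lemma va_qint_neg_odd: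
  assumes "odd m" shows "va (qint_neg q m) = 1"
proof -
  have "qint_neg q m - (\<Sum>k<m. (-1) ^ k) = (\<Sum>i<m. (-1) ^ i * (q ^ i - 1))"
    unfolding qint_neg_def by (simp add: sum_subtractf power_minus[of q] algebra_simps)
  also have "va \<dots> \<le> va (1 - q)"
    using va_one_minus_q_power(2)
    by (intro va_sum_le) (simp_all add: va_mult va_power va_commute[of _ 1] va_nonneg)
  finally have "va (1 - qint_neg q m) < 1"
    using alternating_sum_odd[OF assms] near_one va_commute by (metis order.strict_trans1)
  then show ?thesis using va_unit[of 1] by simp
qed

lemma alt_power_sum_blocks:
  assumes "odd m"
  shows "va (alt_power_sum q n (m * b) - (\<Sum>k<b. (-1) ^ k) * alt_power_sum q n m) \<le> va (qint q m)"
  unfolding alt_power_sum_def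
proof (rule va_block_sum)
  fix j k assume "j < m"
  have "(-1::'a) ^ (m * k) = (-1) ^ k"
    using assms by (simp add: power_mult)
  then have "(-1) ^ (j + m * k) * qint q (j + m * k) ^ n - (-1) ^ k * ((-1) ^ j * qint q j ^ n)
      = (-1) ^ j * (-1) ^ k * (qint q (j + m * k) ^ n - qint q j ^ n)"
    by (simp add: power_add algebra_simps)
  then have "va ((-1) ^ (j + m * k) * qint q (j + m * k) ^ n - (-1) ^ k * ((-1) ^ j * qint q j ^ n))
      = va (qint q (j + m * k) ^ n - qint q j ^ n)"
    by (simp add: va_mult va_power)
  also have "\<dots> \<le> va (qint q (j + m * k) - qint q j)"
    using va_qint by (intro va_power_diff)
  also have "\<dots> = va (qint q (m * k))"
    by (simp add: qint_add va_mult va_q_power)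
  also have "\<dots> \<le> va (qint q m)"
    by (rule va_qint_mult_le)
  finally show "va ((-1) ^ (j + m * k) * qint q (j + m * k) ^ n - (-1) ^ k * ((-1) ^ j * qint q j ^ n))
      \<le> va (qint q m)" .
qed (simp add: va_nonneg)

lemma qint_neg_blocks:
  assumes "odd m"
  shows "va (qint_neg q (m * b) - (\<Sum>k<b. (-1) ^ k) * qint_neg q m) \<le> va (qint q m)"
  unfolding qint_neg_def
proof (rule va_block_sum)
  fix j k assume "j < m"
  have "(- q) ^ m = - (q ^ m)"
    using assms by (simp add: power_minus[of q])
  then have "(- q) ^ (j + m * k) = (- q) ^ j * ((-1) ^ k * q ^ (m * k))"
    by (simp only: power_add power_mult power_minus[of "q ^ m"])
  then have "(- q) ^ (j + m * k) - (-1) ^ k * (- q) ^ j = (- q) ^ j * (-1) ^ k * (q ^ (m * k) - 1)"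
    by (simp add: algebra_simps)
  then have "va ((- q) ^ (j + m * k) - (-1) ^ k * (- q) ^ j) = va (1 - q ^ (m * k))"
    by (simp add: va_mult va_power va_q va_commute)
  also have "\<dots> \<le> va (qint q (m * k))"
    by (rule va_one_minus_q_power(1))
  also have "\<dots> \<le> va (qint q m)"
    by (rule va_qint_mult_le)
  finally show "va ((- q) ^ (j + m * k) - (-1) ^ k * (- q) ^ j) \<le> va (qint q m)" .
qed (simp add: va_nonneg)

lemma qEuler_approx_step:
  assumes "odd m" "odd b"
  shows "va (qEuler_approx q n (m * b) - qEuler_approx q n m) \<le> va (qint q m)"
proof -
  define S where "S k = alt_power_sum q n k" for k
  define D where "D k = qint_neg q k" for k
  have S: "va (S (m * b) - S m) \<le> va (qint q m)"
    using alt_power_sum_blocks[OF assms(1), where n = n and b = b] alternating_sum_odd[OF assms(2), where 'a = 'a] by (simp add: S_def)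
  have D: "va (D (m * b) - D m) \<le> va (qint q m)"
    using qint_neg_blocks[OF assms(1), where b = b] alternating_sum_odd[OF assms(2), where 'a = 'a] by (simp add: D_def)
  have units: "va (D m) = 1" "va (D (m * b)) = 1"
    using assms va_qint_neg_odd by (simp_all add: D_def)
  then have "D m \<noteq> 0" "D (m * b) \<noteq> 0" by auto
  then have "qEuler_approx q n (m * b) - qEuler_approx q n m
      = ((S (m * b) - S m) * D m - S m * (D (m * b) - D m)) / (D (m * b) * D m)"
    by (simp add: qEuler_approx_def S_def D_def diff_frac_eq algebra_simps)
  then have "va (qEuler_approx q n (m * b) - qEuler_approx q n m)
      = va ((S (m * b) - S m) * D m - S m * (D (m * b) - D m))"
    by (simp add: va_divide va_mult units)
  also have "\<dots> \<le> va (qint q m)"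
  proof (rule va_diff_le)
    show "va ((S (m * b) - S m) * D m) \<le> va (qint q m)"
      using S by (simp add: va_mult units)
    have "va (S m) * va (D (m * b) - D m) \<le> 1 * va (qint q m)"
      using D va_alt_power_sum va_nonneg by (intro mult_mono) (simp_all add: S_def)
    then show "va (S m * (D (m * b) - D m)) \<le> va (qint q m)"
      by (simp add: va_mult)
  qed
  finally show ?thesis .
qed

text \<open>The first quotient, normalised by 2/[2]_q, is S p modulo [p]_q: indeed
  (1 + q) [p]_{-q} = 1 + q^p, and 2/(1 + q^p) - 1 = (1 - q^p)/(1 + q^p).\<close>
lemma qEuler_approx_first:
  assumes "odd p" and two: "va 2 = 1"
  shows "va (2 / qint q 2 * qEuler_approx q n p - alt_power_sum q n p) \<le> va (qint q p)"
proof -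
  define S where "S = alt_power_sum q n p"
  have "(1 + q) * qint_neg q p = 1 + q ^ p"
    using qint_one_minus[of "- q" p] assms(1)
    by (simp add: qint_neg_def qint_def power_minus[of q])
  moreover have "qint q 2 = 1 + q"
    by (simp add: qint_def numeral_2_eq_2)
  ultimately have quot: "2 / qint q 2 * qEuler_approx q n p = 2 * S / (1 + q ^ p)"
    by (simp add: qEuler_approx_def S_def)
  have small: "va (1 - q ^ p) \<le> va (qint q p)" "va (1 - q ^ p) < 1"
    using va_one_minus_q_power[of p] near_one by auto
  have "va (2 - (1 - q ^ p)) = 1"
    using va_unit[of 2] two small(2) by simp
  then have unit: "va (1 + q ^ p) = 1" by (simp add: algebra_simps)
  then have "1 + q ^ p \<noteq> 0" by auto
  then have "2 / qint q 2 * qEuler_approx q n p - S = S * (1 - q ^ p) / (1 + q ^ p)"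
    unfolding quot by (simp add: field_simps)
  then have "va (2 / qint q 2 * qEuler_approx q n p - S) = va S * va (1 - q ^ p)"
    by (simp add: va_divide va_mult unit)
  also have "\<dots> \<le> va (qint q p)"
    using va_alt_power_sum[of n p] small(1) va_nonneg
    by (metis S_def mult_left_le_one_le order.trans)
  finally show ?thesis by (simp add: S_def)
qed

lemma qEuler_approx_power_step:
  assumes "odd p"
  shows "va (qEuler_approx q n (p ^ Suc N) - qEuler_approx q n (p ^ N)) \<le> va (qint q (p ^ N))"
  using qEuler_approx_step[of "p ^ N" p n] assms by (simp add: mult.commute)

lemma qEuler_approx_cauchy:
  assumes "odd p" "va (of_nat p) < 1"
  shows "va_cauchy va (\<lambda>N. qEuler_approx q n (p ^ N))"
proof (rule va_cauchy_geometric)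
  define c where "c = max (va (of_nat p)) (va (1 - q))"
  show "0 \<le> c" "c < 1" using assms(2) near_one va_nonneg by (auto simp: c_def le_max_iff_disj)
  show "va (qEuler_approx q n (p ^ Suc N) - qEuler_approx q n (p ^ N)) \<le> c ^ N" for N
    using qEuler_approx_power_step[OF assms(1), of n N] va_qint_power[of p N]
    unfolding c_def by (rule order.trans)
qed

text \<open>All steps after the first are divisible by [p]_q, hence so is the distance from the
  first quotient R p to the limit.\<close>
lemma qEuler_approx_lim_near_first:
  assumes "odd p" and lim: "va_lim va (\<lambda>N. qEuler_approx q n (p ^ N)) L"
  shows "va (L - qEuler_approx q n p) \<le> va (qint q p)"
proof -
  define A where "A = (\<lambda>N. qEuler_approx q n (p ^ N))"
  have "va (A (Suc i) - A i) \<le> va (qint q p)" if "1 \<le> i" for i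
    using qEuler_approx_power_step[OF assms(1), of n i] va_qint_mult_le[of p "p ^ (i - 1)"] that
    by (simp add: A_def power_eq_if[of p i])
  then have telescope: "va (A (1 + (m - 1)) - A 1) \<le> va (qint q p)" for m
    by (intro va_telescope) (simp_all add: va_nonneg)
  have "va (A m - A 1) \<le> va (qint q p)" if "1 \<le> m" for m
    using telescope[of m] le_add_diff_inverse[OF that] by simp
  then have "va (L - A 1) \<le> va (qint q p)"
    using va_lim_le[OF lim[folded A_def]] by blast
  then show ?thesis by (simp add: A_def)
qed

lemma va_two_div_qint_two:
  assumes "va 2 = 1" shows "va (2 / qint q 2) = 1"
proof -
  have "va (2 - (1 - q)) = 1" using va_unit[of 2] assms near_one by simp
  then show ?thesis
    by (simp add: va_divide assms qint_def numeral_2_eq_2 algebra_simps)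
qed

end

text \<open>Identification of the q-Euler number as the limit of the quotients along m = p^N:
  after cancelling q^{-x} (-q)^x = (-1)^x the Riemann sums defining it are exactly these.\<close>
lemma qEuler_eq_lim:
  fixes va :: "'a::field_char_0 \<Rightarrow> real"
  assumes "nav va" and "q \<noteq> 0" and lim: "va_lim va (\<lambda>N. qEuler_approx q n (p ^ N)) L"
  shows "qEuler p va n q = L"
proof -
  have summand: "qint q x ^ n * inverse q ^ x * (- q) ^ x = (-1) ^ x * qint q x ^ n" for x
  proof -
    have "inverse q ^ x * q ^ x = 1" using assms(2) by (simp add: power_inverse)
    then show ?thesis by (simp add: power_minus[of q] algebra_simps)
  qed
  have "(\<lambda>N. 1 / qint_neg q (p ^ N) * (\<Sum>x<p ^ N. qint q x ^ n * inverse q ^ x * (- q) ^ x))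
      = (\<lambda>N. qEuler_approx q n (p ^ N))"
    by (simp only: summand) (simp add: qEuler_approx_def alt_power_sum_def)
  then have "qEuler p va n q = (THE L. va_lim va (\<lambda>N. qEuler_approx q n (p ^ N)) L)"
    unfolding qEuler_def fermionic_qint_def by simp
  also have "\<dots> = L"
    using lim by (rule the_equality) (rule nav.va_lim_unique[OF assms(1) lim])
  finally show ?thesis .
qed

theorem theorem1:
  fixes p :: nat and va :: "'a::field_char_0 \<Rightarrow> real" and q :: 'a and n :: nat
  assumes "prime p" and "odd p"
    and "is_Cp p va"
    and "va (1 - q) < real p powr (- 1 / (real p - 1))"
  shows "va (2 / qint q 2 * qEuler p va n q - (\<Sum>j<p. (-1) ^ j * qint q j ^ n))
           \<le> va (qint q p)"
proof -
  have p3: "p \<ge> 3" using prime_ge_2_nat[OF assms(1)] assms(2) by presburger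
  have nav: "nav va" and complete: "\<And>S. va_cauchy va S \<Longrightarrow> \<exists>L. va_lim va S L"
    and va_p: "va (of_nat p) < 1"
    using assms(3) p3 unfolding is_Cp_def nav_def by auto
  have "real p powr (- 1 / (real p - 1)) < 1" using p3 by (intro powr_less_one) auto
  then interpret nav_near_one va q
    using nav assms(4) by (simp add: nav_near_one_def nav_near_one_axioms_def)
  obtain L where L: "va_lim va (\<lambda>N. qEuler_approx q n (p ^ N)) L"
    using complete qEuler_approx_cauchy[OF assms(2) va_p] by blast
  have E: "qEuler p va n q = L"
    using qEuler_eq_lim[OF nav _ L] va_q by (metis va_0 zero_neq_one)
  define K where "K = 2 / qint q 2"
  have two: "va 2 = 1" using va_two[OF assms(2) va_p] .
  have K: "va K = 1" using va_two_div_qint_two[OF two] by (simp add: K_def)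
  have "K * L - alt_power_sum q n p
      = K * (L - qEuler_approx q n p) + (K * qEuler_approx q n p - alt_power_sum q n p)"
    by (simp add: right_diff_distrib)
  moreover have "va (K * (L - qEuler_approx q n p)) \<le> va (qint q p)"
    using qEuler_approx_lim_near_first[OF assms(2) L] K by (simp add: va_mult)
  moreover have "va (K * qEuler_approx q n p - alt_power_sum q n p) \<le> va (qint q p)"
    using qEuler_approx_first[OF assms(2) two, of n] by (simp add: K_def)
  ultimately have "va (K * L - alt_power_sum q n p) \<le> va (qint q p)"
    by (metis va_add_le)
  then show ?thesis by (simp add: K_def E alt_power_sum_def)
qed

end
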